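(* Let $G$ be a finite connected graph and $r\in\mathbb{N}$. Then the group $\mathcal{D}_r$ of deck transformations of the $r$-local covering $p_r:G_r\to G$ is finitely presented.
   Context: Graphs may have loops and parallel edges and are viewed as 1-complexes; a cycle may be a loop or a pair of parallel edges. A closed walk once around a cycle $O$ is a closed walk in $O$ traversing every edge of $O$ exactly once. For a vertex $x_0$, $\pi_1^r(G,x_0)$ is the subgroup of $\pi_1(G,x_0)$ generated by the classes of all closed walks $W_0QW_0^-$, where $W_0$ is a walk from $x_0$ to a vertex $y$, $Q$ a closed walk at $y$ once around a cycle of length at most $r$, and $W_0^-$ the reverse of $W_0$; it is normal. The $r$-local covering $p_r:G_r\to G$ is the connected normal covering with characteristic subgroup $\pi_1^r(G,x_0)$; its deck group is $\mathcal{D}_r\cong\pi_1(G,x_0)/\pi_1^r(G,x_0)$. *)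

theory Defs
  imports "HOL-Algebra.Algebra"
begin

text \<open>Letters are pairs (a, b); (a, \<not> b) is the formal inverse of (a, b).
  For graphs, a letter is a dart: an edge together with a direction.\<close>

definition flip :: "'a \<times> bool \<Rightarrow> 'a \<times> bool" where
  "flip d = (fst d, \<not> snd d)"

definition inv_word :: "('a \<times> bool) list \<Rightarrow> ('a \<times> bool) list" where
  "inv_word w = rev (map flip w)"

definition red_step :: "(('a \<times> bool) list \<times> ('a \<times> bool) list) set" where
  "red_step = {(u @ [a, flip a] @ v, u @ v) | u a v. True}"

definition word_equiv :: "(('a \<times> bool) list \<times> ('a \<times> bool) list) set" where
  "word_equiv = (red_step \<union> red_step\<inverse>)\<^sup>*"

definition word_class :: "('a \<times> bool) list set \<Rightarrow> ('a \<times> bool) list \<Rightarrow> ('a \<times> bool) list set" where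
  "word_class W w = {w' \<in> W. (w, w') \<in> word_equiv}"

text \<open>Group of equivalence classes of the words in W (W closed under
  concatenation and inversion), multiplication induced by concatenation.\<close>
definition word_group :: "('a \<times> bool) list set \<Rightarrow> ('a \<times> bool) list set monoid" where
  "word_group W = \<lparr> carrier = word_class W ` W,
      monoid.mult = (\<lambda>A B. word_class W ((SOME u. u \<in> A) @ (SOME v. v \<in> B))),
      monoid.one = word_class W [] \<rparr>"

definition free_words :: "'a set \<Rightarrow> ('a \<times> bool) list set" where
  "free_words S = {w. set (map fst w) \<subseteq> S}"

definition free_group :: "'a set \<Rightarrow> ('a \<times> bool) list set monoid" where
  "free_group S = word_group (free_words S)"

definition normal_closure :: "('a, 'b) monoid_scheme \<Rightarrow> 'a set \<Rightarrow> 'a set" where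
  "normal_closure G A = generate G
     {g \<otimes>\<^bsub>G\<^esub> a \<otimes>\<^bsub>G\<^esub> inv\<^bsub>G\<^esub> g | g a. g \<in> carrier G \<and> a \<in> A}"

definition finitely_presented :: "('g, 'b) monoid_scheme \<Rightarrow> bool" where
  "finitely_presented G \<longleftrightarrow>
     (\<exists>(S :: nat set) R. finite S \<and> finite R \<and> R \<subseteq> free_words S \<and>
        G \<cong> (free_group S Mod
               normal_closure (free_group S) (word_class (free_words S) ` R)))"

text \<open>A graph is given by a vertex set V, an edge set E and two endpoint maps
  src, tgt (an arbitrary reference orientation of each edge).\<close>

definition dstart :: "('e \<Rightarrow> 'v) \<Rightarrow> ('e \<Rightarrow> 'v) \<Rightarrow> 'e \<times> bool \<Rightarrow> 'v" where
  "dstart src tgt d = (if snd d then src (fst d) else tgt (fst d))"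

definition dend :: "('e \<Rightarrow> 'v) \<Rightarrow> ('e \<Rightarrow> 'v) \<Rightarrow> 'e \<times> bool \<Rightarrow> 'v" where
  "dend src tgt d = (if snd d then tgt (fst d) else src (fst d))"

definition graph :: "'v set \<Rightarrow> 'e set \<Rightarrow> ('e \<Rightarrow> 'v) \<Rightarrow> ('e \<Rightarrow> 'v) \<Rightarrow> bool" where
  "graph V E src tgt \<longleftrightarrow> (\<forall>e\<in>E. src e \<in> V \<and> tgt e \<in> V)"

primrec walk :: "'v set \<Rightarrow> 'e set \<Rightarrow> ('e \<Rightarrow> 'v) \<Rightarrow> ('e \<Rightarrow> 'v) \<Rightarrow>
                 'v \<Rightarrow> ('e \<times> bool) list \<Rightarrow> 'v \<Rightarrow> bool" where
  "walk V E src tgt x [] y \<longleftrightarrow> x \<in> V \<and> x = y"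
| "walk V E src tgt x (d # ds) y \<longleftrightarrow> x \<in> V \<and> fst d \<in> E \<and> dstart src tgt d = x \<and>
       walk V E src tgt (dend src tgt d) ds y"

definition connected_graph :: "'v set \<Rightarrow> 'e set \<Rightarrow> ('e \<Rightarrow> 'v) \<Rightarrow> ('e \<Rightarrow> 'v) \<Rightarrow> bool" where
  "connected_graph V E src tgt \<longleftrightarrow> V \<noteq> {} \<and>
     (\<forall>x\<in>V. \<forall>y\<in>V. \<exists>w. walk V E src tgt x w y)"

text \<open>A closed walk at y once around a cycle: a nonempty closed walk using each
  of its edges once and passing through each of its vertices once.  (Loops are
  cycles of length 1, pairs of parallel edges cycles of length 2.)\<close>
definition once_around_cycle :: "'v set \<Rightarrow> 'e set \<Rightarrow> ('e \<Rightarrow> 'v) \<Rightarrow> ('e \<Rightarrow> 'v) \<Rightarrow>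
                 'v \<Rightarrow> ('e \<times> bool) list \<Rightarrow> bool" where
  "once_around_cycle V E src tgt y Q \<longleftrightarrow> walk V E src tgt y Q y \<and> Q \<noteq> [] \<and>
     distinct (map fst Q) \<and> distinct (map (dstart src tgt) Q)"

definition closed_walks :: "'v set \<Rightarrow> 'e set \<Rightarrow> ('e \<Rightarrow> 'v) \<Rightarrow> ('e \<Rightarrow> 'v) \<Rightarrow> 'v \<Rightarrow>
                 ('e \<times> bool) list set" where
  "closed_walks V E src tgt x0 = {w. walk V E src tgt x0 w x0}"

definition pi1 :: "'v set \<Rightarrow> 'e set \<Rightarrow> ('e \<Rightarrow> 'v) \<Rightarrow> ('e \<Rightarrow> 'v) \<Rightarrow> 'v \<Rightarrow>
                 ('e \<times> bool) list set monoid" where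
  "pi1 V E src tgt x0 = word_group (closed_walks V E src tgt x0)"

definition pi1_r :: "'v set \<Rightarrow> 'e set \<Rightarrow> ('e \<Rightarrow> 'v) \<Rightarrow> ('e \<Rightarrow> 'v) \<Rightarrow> nat \<Rightarrow> 'v \<Rightarrow>
                 ('e \<times> bool) list set set" where
  "pi1_r V E src tgt r x0 = generate (pi1 V E src tgt x0)
     {word_class (closed_walks V E src tgt x0) (W0 @ Q @ inv_word W0) | W0 Q y.
        walk V E src tgt x0 W0 y \<and> once_around_cycle V E src tgt y Q \<and> length Q \<le> r}"

text \<open>Deck group of the r-local covering: \<pi>_1(G,x0) / \<pi>_1^r(G,x0).\<close>
definition deck_group_r :: "'v set \<Rightarrow> 'e set \<Rightarrow> ('e \<Rightarrow> 'v) \<Rightarrow> ('e \<Rightarrow> 'v) \<Rightarrow> nat \<Rightarrow> 'v \<Rightarrow>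
                 ('e \<times> bool) list set set monoid" where
  "deck_group_r V E src tgt r x0 = pi1 V E src tgt x0 Mod pi1_r V E src tgt r x0"

end

theory Submission
  imports Defs
begin

(* Fix for every vertex v a walk b v from x0 to v, with b x0 empty. Sending an edge
   letter d to the loop b (start d) d (b (end d))^-1 and a closed walk at x0 to its word of
   edge letters gives homomorphisms between the free group F on the (finitely many) edges
   and pi_1(G, x0) that are mutually inverse up to the relators
     d = b (start d) d (b (end d))^-1   and   b y Q (b y)^-1  (Q a cycle of length <= r at y).
   Since every generator W0 Q W0^-1 of pi_1^r is conjugate to one of the finitely many loops
   b y Q (b y)^-1, pi_1^r is the normal closure of these loops, and both homomorphisms
   respect the two normal closures.  Hence pi_1 / pi_1^r is isomorphic to F modulo the normal
   closure of finitely many relators. *)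

section \<open>Free reduction of words\<close>

lemma flip_flip [simp]: "flip (flip a) = a"
  by (simp add: flip_def)

lemma fst_flip [simp]: "fst (flip a) = fst a"
  by (simp add: flip_def)

lemma inv_word_Nil [simp]: "inv_word [] = []"
  by (simp add: inv_word_def)

lemma inv_word_Cons [simp]: "inv_word (a # w) = inv_word w @ [flip a]"
  by (simp add: inv_word_def)

lemma inv_word_append [simp]: "inv_word (u @ v) = inv_word v @ inv_word u"
  by (simp add: inv_word_def)

lemma inv_word_inv_word [simp]: "inv_word (inv_word w) = w"
  by (simp add: inv_word_def rev_map comp_def)

lemma fst_set_inv_word [simp]: "fst ` set (inv_word w) = fst ` set w"
  by (simp add: inv_word_def image_image)

lemma apfst_flip: "apfst f (flip a) = flip (apfst f a)"
  by (cases a) (simp add: flip_def)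

lemma word_equiv_refl [simp]: "(u, u) \<in> word_equiv"
  by (simp add: word_equiv_def)

lemma word_equiv_sym: "(u, v) \<in> word_equiv \<Longrightarrow> (v, u) \<in> word_equiv"
  unfolding word_equiv_def by (metis converse_Un converse_converse rtrancl_converseI sup_commute)

lemma word_equiv_trans [trans]: "(u, v) \<in> word_equiv \<Longrightarrow> (v, w) \<in> word_equiv \<Longrightarrow> (u, w) \<in> word_equiv"
  unfolding word_equiv_def by (rule rtrancl_trans)

lemma word_equiv_reduce: "(u @ [a, flip a] @ v, u @ v) \<in> word_equiv"
  unfolding word_equiv_def red_step_def by blast

lemma word_equiv_preserved:
  assumes reduce: "\<And>u a v. (f (u @ [a, flip a] @ v), f (u @ v)) \<in> word_equiv"
    and "(x, y) \<in> word_equiv"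
  shows "(f x, f y) \<in> word_equiv"
  using assms(2)[unfolded word_equiv_def]
proof (induction rule: rtrancl_induct)
  case base
  then show ?case by simp
next
  case (step y z)
  from step.hyps(2) consider (forward) u a v where "y = u @ [a, flip a] @ v" "z = u @ v"
    | (backward) u a v where "z = u @ [a, flip a] @ v" "y = u @ v"
    unfolding red_step_def by blast
  then have "(f y, f z) \<in> word_equiv"
  proof cases
    case forward
    then show ?thesis using reduce by simp
  next
    case backward
    then show ?thesis using word_equiv_sym[OF reduce] by simp
  qed
  with step.IH show ?case by (rule word_equiv_trans)
qed

lemma word_equiv_append_context:
  assumes "(u, v) \<in> word_equiv"
  shows "(x @ u @ y, x @ v @ y) \<in> word_equiv"
proof (rule word_equiv_preserved[where f = "\<lambda>w. x @ w @ y", OF _ assms])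
  fix u a v
  show "(x @ (u @ [a, flip a] @ v) @ y, x @ (u @ v) @ y) \<in> word_equiv"
    using word_equiv_reduce[of "x @ u" a "v @ y"] by simp
qed

lemma word_equiv_append:
  "(u, u') \<in> word_equiv \<Longrightarrow> (v, v') \<in> word_equiv \<Longrightarrow> (u @ v, u' @ v') \<in> word_equiv"
  using word_equiv_append_context[of u u' "[]" v] word_equiv_append_context[of v v' u' "[]"]
  by (auto intro: word_equiv_trans)

lemma word_equiv_inv_word:
  assumes "(u, v) \<in> word_equiv"
  shows "(inv_word u, inv_word v) \<in> word_equiv"
proof (rule word_equiv_preserved[where f = inv_word, OF _ assms])
  fix u v :: "('a \<times> bool) list" and a
  show "(inv_word (u @ [a, flip a] @ v), inv_word (u @ v)) \<in> word_equiv"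
    using word_equiv_reduce[of "inv_word v" a "inv_word u"] by simp
qed

lemma word_equiv_cancel: "(w @ inv_word w, []) \<in> word_equiv"
proof (induction w)
  case Nil
  then show ?case by simp
next
  case (Cons a w)
  have "((a # w) @ inv_word (a # w), [a] @ [] @ [flip a]) \<in> word_equiv"
    using word_equiv_append_context[OF Cons.IH, of "[a]" "[flip a]"] by simp
  also have "([a] @ [] @ [flip a], []) \<in> word_equiv"
    using word_equiv_reduce[of "[]" a "[]"] by simp
  finally show ?case .
qed

lemma word_equiv_cancel_inner: "(u @ inv_word v @ v @ w, u @ w) \<in> word_equiv"
  using word_equiv_append_context[OF word_equiv_cancel[of "inv_word v"], of u w] by simp

lemma word_equiv_concat_map:
  assumes "\<And>a. g (flip a) = inv_word (g a)" and "(u, v) \<in> word_equiv"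
  shows "(concat (map g u), concat (map g v)) \<in> word_equiv"
proof (rule word_equiv_preserved[OF _ assms(2)])
  fix u a v
  show "(concat (map g (u @ [a, flip a] @ v)), concat (map g (u @ v))) \<in> word_equiv"
    using word_equiv_append_context[OF word_equiv_cancel[of "g a"], of "concat (map g u)"
        "concat (map g v)"]
    by (simp add: assms(1))
qed

lemma word_equiv_map:
  assumes "\<And>a. f (flip a) = flip (f a)" and "(u, v) \<in> word_equiv"
  shows "(map f u, map f v) \<in> word_equiv"
proof (rule word_equiv_preserved[OF _ assms(2)])
  fix u a v
  show "(map f (u @ [a, flip a] @ v), map f (u @ v)) \<in> word_equiv"
    using word_equiv_reduce[of "map f u" "f a" "map f v"] by (simp add: assms(1))
qed

section \<open>Groups of word classes\<close>

locale group_of_words =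
  fixes W :: "('a \<times> bool) list set"
  assumes Nil_mem: "[] \<in> W"
    and append_mem: "u \<in> W \<Longrightarrow> v \<in> W \<Longrightarrow> u @ v \<in> W"
    and inv_word_mem: "u \<in> W \<Longrightarrow> inv_word u \<in> W"
begin

lemma word_class_self: "w \<in> W \<Longrightarrow> w \<in> word_class W w"
  by (simp add: word_class_def)

lemma word_class_eq: "(u, v) \<in> word_equiv \<Longrightarrow> word_class W u = word_class W v"
  unfolding word_class_def using word_equiv_sym word_equiv_trans by blast

lemma some_word_class:
  assumes "u \<in> W"
  shows "(SOME x. x \<in> word_class W u) \<in> W" and "((SOME x. x \<in> word_class W u), u) \<in> word_equiv"
proof -
  have "(SOME x. x \<in> word_class W u) \<in> word_class W u"
    using word_class_self[OF assms] by (rule someI)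
  then show "(SOME x. x \<in> word_class W u) \<in> W" "((SOME x. x \<in> word_class W u), u) \<in> word_equiv"
    by (auto simp: word_class_def intro: word_equiv_sym)
qed

lemma carrier_word_group: "carrier (word_group W) = word_class W ` W"
  by (simp add: word_group_def)

lemma one_word_group: "\<one>\<^bsub>word_group W\<^esub> = word_class W []"
  by (simp add: word_group_def)

lemma mult_word_group:
  "u \<in> W \<Longrightarrow> v \<in> W \<Longrightarrow> word_class W u \<otimes>\<^bsub>word_group W\<^esub> word_class W v = word_class W (u @ v)"
  by (simp add: word_group_def word_class_eq word_equiv_append some_word_class)

lemma group_word_group: "group (word_group W)"
proof (rule groupI)
  fix x assume "x \<in> carrier (word_group W)"
  then obtain u where u: "u \<in> W" "x = word_class W u"
    by (auto simp: carrier_word_group)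
  then have "word_class W (inv_word u) \<otimes>\<^bsub>word_group W\<^esub> x = \<one>\<^bsub>word_group W\<^esub>"
    using word_class_eq[OF word_equiv_cancel[of "inv_word u"]]
    by (simp add: mult_word_group inv_word_mem one_word_group)
  moreover have "word_class W (inv_word u) \<in> carrier (word_group W)"
    using u inv_word_mem by (simp add: carrier_word_group)
  ultimately show "\<exists>y\<in>carrier (word_group W). y \<otimes>\<^bsub>word_group W\<^esub> x = \<one>\<^bsub>word_group W\<^esub>"
    by blast
qed (auto simp: carrier_word_group mult_word_group one_word_group append_mem Nil_mem)

lemma inv_word_group:
  assumes "u \<in> W"
  shows "inv\<^bsub>word_group W\<^esub> (word_class W u) = word_class W (inv_word u)"
proof -
  interpret group "word_group W" by (rule group_word_group)
  have "word_class W (inv_word u) \<otimes>\<^bsub>word_group W\<^esub> word_class W u = \<one>\<^bsub>word_group W\<^esub>"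
    using assms word_class_eq[OF word_equiv_cancel[of "inv_word u"]]
    by (simp add: mult_word_group inv_word_mem one_word_group)
  then show ?thesis
    using assms inv_word_mem by (intro inv_equality) (auto simp: carrier_word_group)
qed

lemma conj_word_group:
  assumes "u \<in> W" "v \<in> W"
  shows "word_class W u \<otimes>\<^bsub>word_group W\<^esub> word_class W v \<otimes>\<^bsub>word_group W\<^esub>
           inv\<^bsub>word_group W\<^esub> (word_class W u) = word_class W (u @ v @ inv_word u)"
  using assms by (simp add: inv_word_group mult_word_group append_mem inv_word_mem)

end

lemma group_of_free_words: "group_of_words (free_words S)"
  by unfold_locales (auto simp: free_words_def)

definition word_group_map ::
  "('b \<times> bool) list set \<Rightarrow> (('a \<times> bool) list \<Rightarrow> ('b \<times> bool) list) \<Rightarrow>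
     ('a \<times> bool) list set \<Rightarrow> ('b \<times> bool) list set" where
  "word_group_map W' f Z = word_class W' (f (SOME u. u \<in> Z))"

locale word_group_morphism = dom: group_of_words W + cod: group_of_words W'
  for W :: "('a \<times> bool) list set" and W' :: "('b \<times> bool) list set" +
  fixes f :: "('a \<times> bool) list \<Rightarrow> ('b \<times> bool) list"
  assumes maps_into: "u \<in> W \<Longrightarrow> f u \<in> W'"
    and map_append: "f (u @ v) = f u @ f v"
    and respects_word_equiv: "(u, v) \<in> word_equiv \<Longrightarrow> (f u, f v) \<in> word_equiv"
begin

lemma word_group_map_class: "u \<in> W \<Longrightarrow> word_group_map W' f (word_class W u) = word_class W' (f u)"
  unfolding word_group_map_def by (intro cod.word_class_eq respects_word_equiv dom.some_word_class)

lemma word_group_map_hom: "word_group_map W' f \<in> hom (word_group W) (word_group W')"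
proof (rule homI)
  fix Z assume "Z \<in> carrier (word_group W)"
  then show "word_group_map W' f Z \<in> carrier (word_group W')"
    by (auto simp: dom.carrier_word_group cod.carrier_word_group word_group_map_class maps_into)
next
  fix Z Y assume "Z \<in> carrier (word_group W)" "Y \<in> carrier (word_group W)"
  then obtain u v where "u \<in> W" "v \<in> W" "Z = word_class W u" "Y = word_class W v"
    by (auto simp: dom.carrier_word_group)
  then show "word_group_map W' f (Z \<otimes>\<^bsub>word_group W\<^esub> Y) =
      word_group_map W' f Z \<otimes>\<^bsub>word_group W'\<^esub> word_group_map W' f Y"
    by (simp add: dom.mult_word_group cod.mult_word_group word_group_map_class dom.append_mem
        maps_into map_append)
qed

lemma group_hom_word_group_map: "group_hom (word_group W) (word_group W') (word_group_map W' f)"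
  by (simp add: group_hom_def group_hom_axioms_def dom.group_word_group cod.group_word_group
      word_group_map_hom)

end

section \<open>Normal closures and presentations of quotients\<close>

lemma (in group) subset_normal_closure: "A \<subseteq> carrier G \<Longrightarrow> A \<subseteq> normal_closure G A"
  unfolding normal_closure_def by (force intro: generate.incl)

lemma (in group) normal_closure_normal:
  assumes A: "A \<subseteq> carrier G"
  shows "normal_closure G A \<lhd> G"
  unfolding normal_closure_def
proof (rule normal_generateI)
  fix h g assume "h \<in> {g \<otimes> a \<otimes> inv g | g a. g \<in> carrier G \<and> a \<in> A}" and g: "g \<in> carrier G"
  then obtain g' a where "h = g' \<otimes> a \<otimes> inv g'" "g' \<in> carrier G" "a \<in> A"
    by blast
  with A g have "g \<otimes> h \<otimes> inv g = (g \<otimes> g') \<otimes> a \<otimes> inv (g \<otimes> g')" "g \<otimes> g' \<in> carrier G"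
    by (auto simp: m_assoc inv_mult_group)
  with \<open>a \<in> A\<close> show "g \<otimes> h \<otimes> inv g \<in> {g \<otimes> a \<otimes> inv g | g a. g \<in> carrier G \<and> a \<in> A}"
    by blast
qed (use A in auto)

lemma (in group_hom) image_normal_closure_subset:
  assumes "A \<subseteq> carrier G" and K: "K \<lhd> H" and "h ` A \<subseteq> K"
  shows "h ` normal_closure G A \<subseteq> K"
proof -
  let ?C = "{g \<otimes>\<^bsub>G\<^esub> a \<otimes>\<^bsub>G\<^esub> inv\<^bsub>G\<^esub> g | g a. g \<in> carrier G \<and> a \<in> A}"
  have C: "?C \<subseteq> carrier G"
    using assms(1) by auto
  have "h ` ?C \<subseteq> K"
  proof
    fix y assume "y \<in> h ` ?C"
    then obtain g a where "y = h (g \<otimes>\<^bsub>G\<^esub> a \<otimes>\<^bsub>G\<^esub> inv\<^bsub>G\<^esub> g)" "g \<in> carrier G" "a \<in> A"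
      by blast
    moreover have "h a \<in> K"
      using \<open>a \<in> A\<close> assms(3) by blast
    ultimately show "y \<in> K"
      using assms(1) normal.inv_op_closed2[OF K] by auto
  qed
  then have "generate H (h ` ?C) \<subseteq> K"
    by (rule H.generate_subgroup_incl[OF _ normal_imp_subgroup[OF K]])
  then show ?thesis
    unfolding normal_closure_def generate_img[OF C] .
qed

lemma FactGroup_iso_via_retraction:
  assumes N: "N \<lhd> F" and K: "K \<lhd> P"
    and h: "h \<in> hom F P" and s: "s \<in> carrier P \<rightarrow> carrier F"
    and h_s: "\<And>p. p \<in> carrier P \<Longrightarrow> h (s p) = p"
    and h_N: "h ` N \<subseteq> K" and s_K: "s ` K \<subseteq> N"
    and s_h: "\<And>x. x \<in> carrier F \<Longrightarrow> x \<otimes>\<^bsub>F\<^esub> inv\<^bsub>F\<^esub> s (h x) \<in> N"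
  shows "P Mod K \<cong> F Mod N"
proof -
  interpret F: normal N F by (rule N)
  interpret P: normal K P by (rule K)
  let ?\<phi> = "\<lambda>x. K #>\<^bsub>P\<^esub> h x"
  have hom: "group_hom F (P Mod K) ?\<phi>"
    using hom_compose[OF h P.r_coset_hom_Mod]
    by (simp add: group_hom_def group_hom_axioms_def P.factorgroup_is_group comp_def)
  have "?\<phi> ` carrier F = carrier (P Mod K)"
  proof
    show "?\<phi> ` carrier F \<subseteq> carrier (P Mod K)"
      using h by (auto simp: carrier_FactGroup hom_def)
    show "carrier (P Mod K) \<subseteq> ?\<phi> ` carrier F"
      using s h_s by (force simp: carrier_FactGroup)
  qed
  then have "F Mod kernel F (P Mod K) ?\<phi> \<cong> P Mod K"
    by (rule group_hom.FactGroup_iso[OF hom])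
  moreover have "kernel F (P Mod K) ?\<phi> = N"
  proof (intro equalityI subsetI)
    fix x assume "x \<in> kernel F (P Mod K) ?\<phi>"
    then have x: "x \<in> carrier F" and "K #>\<^bsub>P\<^esub> h x = K"
      by (auto simp: kernel_def)
    then have "h x \<in> K"
      using h P.coset_join1 P.subgroup_axioms by (auto simp: hom_def)
    then have "s (h x) \<in> N"
      using s_K by blast
    then have "(x \<otimes>\<^bsub>F\<^esub> inv\<^bsub>F\<^esub> s (h x)) \<otimes>\<^bsub>F\<^esub> s (h x) \<in> N"
      using s_h[OF x] by blast
    then show "x \<in> N"
      using x s h by (simp add: F.m_assoc Pi_iff hom_def)
  next
    fix x assume "x \<in> N"
    then show "x \<in> kernel F (P Mod K) ?\<phi>"
      using h_N P.coset_join2 P.subgroup_axioms h by (auto simp: kernel_def hom_def)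
  qed
  ultimately show ?thesis
    by (simp add: group.iso_sym F.factorgroup_is_group)
qed

lemma free_group_congruent_mod_normal:
  assumes N: "N \<lhd> free_group S" and j: "j \<in> hom (free_group S) (free_group S)"
    and letters: "\<And>a. fst a \<in> S \<Longrightarrow>
      word_class (free_words S) [a] \<otimes>\<^bsub>free_group S\<^esub>
        inv\<^bsub>free_group S\<^esub> j (word_class (free_words S) [a]) \<in> N"
    and x: "x \<in> carrier (free_group S)"
  shows "x \<otimes>\<^bsub>free_group S\<^esub> inv\<^bsub>free_group S\<^esub> j x \<in> N"
proof -
  let ?F = "free_group S" and ?cl = "word_class (free_words S)"
  interpret W: group_of_words "free_words S" by (rule group_of_free_words)
  interpret normal N ?F by (rule N)
  interpret j: group_hom ?F ?F j
    using j by (simp add: group_hom_def group_hom_axioms_def)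
  have carrier: "carrier ?F = ?cl ` free_words S"
    by (simp add: free_group_def W.carrier_word_group)
  have "?cl u \<otimes>\<^bsub>?F\<^esub> inv\<^bsub>?F\<^esub> j (?cl u) \<in> N" if "u \<in> free_words S" for u
    using that
  proof (induction u)
    case Nil
    have "?cl [] = \<one>\<^bsub>?F\<^esub>"
      by (simp add: free_group_def W.one_word_group)
    then show ?case
      by simp
  next
    case (Cons a u)
    then have a: "fst a \<in> S" "[a] \<in> free_words S" and u: "u \<in> free_words S"
      by (auto simp: free_words_def)
    define A where "A = ?cl [a]"
    define U where "U = ?cl u"
    have A: "A \<in> carrier ?F" and U: "U \<in> carrier ?F"
      using a u by (auto simp: A_def U_def carrier)
    have cons: "?cl (a # u) = A \<otimes>\<^bsub>?F\<^esub> U"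
      using a u W.mult_word_group[of "[a]" u] by (simp add: A_def U_def free_group_def)
    have cancel: "inv\<^bsub>?F\<^esub> A \<otimes>\<^bsub>?F\<^esub> (A \<otimes>\<^bsub>?F\<^esub> y) = y" if "y \<in> carrier ?F" for y
      using A that by (simp flip: m_assoc)
    have "?cl (a # u) \<otimes>\<^bsub>?F\<^esub> inv\<^bsub>?F\<^esub> j (?cl (a # u)) =
        (A \<otimes>\<^bsub>?F\<^esub> (U \<otimes>\<^bsub>?F\<^esub> inv\<^bsub>?F\<^esub> j U) \<otimes>\<^bsub>?F\<^esub> inv\<^bsub>?F\<^esub> A) \<otimes>\<^bsub>?F\<^esub>
          (A \<otimes>\<^bsub>?F\<^esub> inv\<^bsub>?F\<^esub> j A)"
      using A U by (simp add: cons m_assoc inv_mult_group cancel)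
    also have "\<dots> \<in> N"
      using Cons.IH[OF u] letters[OF a(1)] A by (simp add: U_def A_def inv_op_closed2)
    finally show ?case .
  qed
  then show ?thesis
    using x by (auto simp: carrier)
qed

section \<open>Walks\<close>

lemma dstart_flip [simp]: "dstart src tgt (flip d) = dend src tgt d"
  by (simp add: dstart_def dend_def flip_def)

lemma dend_flip [simp]: "dend src tgt (flip d) = dstart src tgt d"
  by (simp add: dstart_def dend_def flip_def)

lemma walk_endpoints: "walk V E src tgt x w y \<Longrightarrow> x \<in> V \<and> y \<in> V"
  by (induction w arbitrary: x) auto

lemma walk_append:
  "walk V E src tgt x u y \<Longrightarrow> walk V E src tgt y v z \<Longrightarrow> walk V E src tgt x (u @ v) z"
  by (induction u arbitrary: x) auto

lemma walk_edges: "walk V E src tgt x w y \<Longrightarrow> fst ` set w \<subseteq> E"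
  by (induction w arbitrary: x) auto

lemma walk_inv_word: "walk V E src tgt x w y \<Longrightarrow> walk V E src tgt y (inv_word w) x"
proof (induction w arbitrary: x)
  case Nil
  then show ?case by auto
next
  case (Cons d w)
  then have "walk V E src tgt y (inv_word w) (dend src tgt d)"
    and "walk V E src tgt (dend src tgt d) [flip d] x"
    using walk_endpoints by fastforce+
  then have "walk V E src tgt y (inv_word w @ [flip d]) x"
    by (rule walk_append)
  then show ?case
    by simp
qed

lemma group_of_closed_walks: "x0 \<in> V \<Longrightarrow> group_of_words (closed_walks V E src tgt x0)"
  by unfold_locales (auto simp: closed_walks_def intro: walk_append walk_inv_word)

section \<open>A finite presentation of the deck group\<close>

locale finite_rooted_graph =
  fixes V :: "'v set" and E :: "'e set" and src tgt :: "'e \<Rightarrow> 'v" and x0 :: 'v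
  assumes graph: "graph V E src tgt"
    and finite_vertices: "finite V" and finite_edges: "finite E"
    and connected: "connected_graph V E src tgt"
    and root: "x0 \<in> V"
begin

abbreviation "loops \<equiv> closed_walks V E src tgt x0"
abbreviation "Pi1 \<equiv> pi1 V E src tgt x0"

sublocale loops: group_of_words loops
  using root by (rule group_of_closed_walks)

lemma Pi1_eq: "Pi1 = word_group loops"
  by (simp add: pi1_def)

lemma dart_endpoints: "fst d \<in> E \<Longrightarrow> dstart src tgt d \<in> V \<and> dend src tgt d \<in> V"
  using graph by (auto simp: graph_def dstart_def dend_def)

(* b x0 = [] makes word_loop (code w) equivalent to the closed walk w itself rather than to a
   conjugate of it. *)
definition base_walk :: "'v \<Rightarrow> ('e \<times> bool) list" where
  "base_walk v = (if v = x0 then [] else SOME w. walk V E src tgt x0 w v)"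

lemma walk_base_walk:
  assumes "v \<in> V"
  shows "walk V E src tgt x0 (base_walk v) v"
proof (cases "v = x0")
  case False
  from connected root assms obtain w where "walk V E src tgt x0 w v"
    by (auto simp: connected_graph_def)
  with False show ?thesis
    by (simp add: base_walk_def) (rule someI)
qed (use root in \<open>simp add: base_walk_def\<close>)

definition dart_loop :: "'e \<times> bool \<Rightarrow> ('e \<times> bool) list" where
  "dart_loop d = base_walk (dstart src tgt d) @ [d] @ inv_word (base_walk (dend src tgt d))"

lemma dart_loop_flip: "dart_loop (flip d) = inv_word (dart_loop d)"
  by (simp add: dart_loop_def)

lemma dart_loop_closed: "fst d \<in> E \<Longrightarrow> dart_loop d \<in> loops"
  using dart_endpoints[of d]
  by (auto simp: dart_loop_def closed_walks_def
      intro!: walk_append[OF walk_base_walk] walk_inv_word[OF walk_base_walk])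

definition edge_code :: "'e \<Rightarrow> nat" where
  "edge_code = (SOME f. inj_on f E)"

lemma inj_edge_code: "inj_on edge_code E"
proof -
  have "\<exists>f :: 'e \<Rightarrow> nat. inj_on f E"
    using finite_imp_inj_to_nat_seg[OF finite_edges] by blast
  then show ?thesis
    unfolding edge_code_def by (rule someI_ex)
qed

definition generators :: "nat set" where
  "generators = edge_code ` E"

lemma finite_generators: "finite generators"
  using finite_edges by (simp add: generators_def)

abbreviation "words \<equiv> free_words generators"
abbreviation "Free \<equiv> free_group generators"

sublocale words: group_of_words words
  by (rule group_of_free_words)

lemma Free_eq: "Free = word_group words"
  by (simp add: free_group_def)

abbreviation code :: "('e \<times> bool) list \<Rightarrow> (nat \<times> bool) list" where
  "code \<equiv> map (apfst edge_code)"

definition letter_loop :: "nat \<times> bool \<Rightarrow> ('e \<times> bool) list" where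
  "letter_loop a = dart_loop (apfst (the_inv_into E edge_code) a)"

definition word_loop :: "(nat \<times> bool) list \<Rightarrow> ('e \<times> bool) list" where
  "word_loop u = concat (map letter_loop u)"

lemma word_loop_simps [simp]:
  "word_loop [] = []" "word_loop (a # u) = letter_loop a @ word_loop u"
  "word_loop (u @ v) = word_loop u @ word_loop v"
  by (simp_all add: word_loop_def)

lemma letter_loop_flip: "letter_loop (flip a) = inv_word (letter_loop a)"
  by (simp add: letter_loop_def apfst_flip dart_loop_flip)

lemma letter_loop_mem_loops:
  assumes "fst a \<in> generators"
  shows "letter_loop a \<in> loops"
proof -
  have "the_inv_into E edge_code (fst a) \<in> E"
    using assms inj_edge_code by (simp add: generators_def the_inv_into_into)
  then show ?thesis
    unfolding letter_loop_def by (simp add: dart_loop_closed)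
qed

lemma word_loop_inv_word: "word_loop (inv_word u) = inv_word (word_loop u)"
  by (induction u) (simp_all add: letter_loop_flip)

lemma code_mem_words:
  assumes "walk V E src tgt x w y"
  shows "code w \<in> words"
proof -
  have "fst ` set (code w) = edge_code ` fst ` set w"
    by (simp add: image_image)
  also have "\<dots> \<subseteq> generators"
    unfolding generators_def using walk_edges[OF assms] by (rule image_mono)
  finally show ?thesis
    by (simp add: free_words_def)
qed

lemma word_loop_code:
  "walk V E src tgt x w y \<Longrightarrow>
     (word_loop (code w), base_walk x @ w @ inv_word (base_walk y)) \<in> word_equiv"
proof (induction w arbitrary: x)
  case Nil
  then show ?case
    using word_equiv_sym[OF word_equiv_cancel] by simp
next
  case (Cons d w)
  then have d: "fst d \<in> E" "dstart src tgt d = x"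
    and w: "walk V E src tgt (dend src tgt d) w y"
    by auto
  have "letter_loop (apfst edge_code d) = dart_loop d"
    using d(1) inj_edge_code by (cases d) (simp add: letter_loop_def the_inv_into_f_f)
  then have "(word_loop (code (d # w)),
      dart_loop d @ base_walk (dend src tgt d) @ w @ inv_word (base_walk y)) \<in> word_equiv"
    using word_equiv_append_context[OF Cons.IH[OF w], of "dart_loop d" "[]"] by simp
  also have "(dart_loop d @ base_walk (dend src tgt d) @ w @ inv_word (base_walk y),
      base_walk x @ (d # w) @ inv_word (base_walk y)) \<in> word_equiv"
    using word_equiv_cancel_inner[of "base_walk x @ [d]" "base_walk (dend src tgt d)"]
    by (simp add: dart_loop_def d(2))
  finally show ?case .
qed

lemma word_loop_code_loop: "w \<in> loops \<Longrightarrow> (word_loop (code w), w) \<in> word_equiv"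
  using word_loop_code[of x0 w x0] by (simp add: closed_walks_def base_walk_def)

sublocale word_loop: word_group_morphism words loops word_loop
proof (intro word_group_morphism.intro word_group_morphism_axioms.intro
    words.group_of_words_axioms loops.group_of_words_axioms)
  fix u assume "u \<in> words"
  then show "word_loop u \<in> loops"
  proof (induction u)
    case (Cons a u)
    then have "fst a \<in> generators" "u \<in> words"
      by (simp_all add: free_words_def)
    with Cons.IH show ?case
      by (simp add: loops.append_mem letter_loop_mem_loops)
  qed (simp add: loops.Nil_mem)
next
  fix u v :: "(nat \<times> bool) list"
  show "word_loop (u @ v) = word_loop u @ word_loop v"
    by simp
  assume "(u, v) \<in> word_equiv"
  then show "(word_loop u, word_loop v) \<in> word_equiv"
    unfolding word_loop_def by (rule word_equiv_concat_map[where g = letter_loop, OF letter_loop_flip])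
qed

sublocale code: word_group_morphism loops words code
proof (intro word_group_morphism.intro word_group_morphism_axioms.intro
    words.group_of_words_axioms loops.group_of_words_axioms)
  fix u v :: "('e \<times> bool) list"
  show "u \<in> loops \<Longrightarrow> code u \<in> words"
    unfolding closed_walks_def mem_Collect_eq by (rule code_mem_words)
  show "code (u @ v) = code u @ code v"
    by simp
  assume "(u, v) \<in> word_equiv"
  then show "(code u, code v) \<in> word_equiv"
    by (rule word_equiv_map[where f = "apfst edge_code", OF apfst_flip])
qed

abbreviation "loop_hom \<equiv> word_group_map loops word_loop"
abbreviation "code_hom \<equiv> word_group_map words code"

lemma group_hom_loop_hom: "group_hom Free Pi1 loop_hom"
  unfolding Free_eq Pi1_eq by (rule word_loop.group_hom_word_group_map)

lemma group_hom_code_hom: "group_hom Pi1 Free code_hom"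
  unfolding Free_eq Pi1_eq by (rule code.group_hom_word_group_map)

lemma loop_hom_code_hom:
  assumes "p \<in> carrier Pi1"
  shows "loop_hom (code_hom p) = p"
proof -
  from assms obtain w where w: "w \<in> loops" and p: "p = word_class loops w"
    by (auto simp: Pi1_eq loops.carrier_word_group)
  then have "loop_hom (code_hom p) = word_class loops (word_loop (code w))"
    by (simp add: code.word_group_map_class word_loop.word_group_map_class code.maps_into)
  also have "\<dots> = p"
    using p word_loop_code_loop[OF w] by (simp add: loops.word_class_eq)
  finally show ?thesis .
qed

definition cycle_loops :: "nat \<Rightarrow> ('e \<times> bool) list set" where
  "cycle_loops r = {base_walk y @ Q @ inv_word (base_walk y) | y Q.
     y \<in> V \<and> once_around_cycle V E src tgt y Q \<and> length Q \<le> r}"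

lemma conj_cycle_mem_loops:
  assumes "walk V E src tgt x0 W0 y" and "once_around_cycle V E src tgt y Q"
  shows "W0 @ Q @ inv_word W0 \<in> loops"
  using assms by (auto simp: closed_walks_def once_around_cycle_def intro!: walk_append walk_inv_word)

lemma cycle_loops_subset: "cycle_loops r \<subseteq> loops"
  by (auto simp: cycle_loops_def intro: conj_cycle_mem_loops walk_base_walk)

lemma finite_cycle_loops: "finite (cycle_loops r)"
proof -
  let ?B = "V \<times> {Q. set Q \<subseteq> E \<times> (UNIV :: bool set) \<and> length Q \<le> r}"
  have "cycle_loops r \<subseteq> (\<lambda>(y, Q). base_walk y @ Q @ inv_word (base_walk y)) ` ?B"
  proof
    fix c assume "c \<in> cycle_loops r"
    then obtain y Q where c: "c = base_walk y @ Q @ inv_word (base_walk y)" and "y \<in> V"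
      and Q: "once_around_cycle V E src tgt y Q" "length Q \<le> r"
      by (auto simp: cycle_loops_def)
    from Q(1) have "walk V E src tgt y Q y"
      by (simp add: once_around_cycle_def)
    then have "fst ` set Q \<subseteq> E"
      by (rule walk_edges)
    then have "(y, Q) \<in> ?B"
      using \<open>y \<in> V\<close> Q(2) by auto
    with c show "c \<in> (\<lambda>(y, Q). base_walk y @ Q @ inv_word (base_walk y)) ` ?B"
      by force
  qed
  moreover have "finite ?B"
    using finite_vertices finite_edges
    by (intro finite_cartesian_product finite_lists_length_le) simp_all
  ultimately show ?thesis
    by (blast intro: finite_surj)
qed

lemma pi1_r_eq_normal_closure:
  "pi1_r V E src tgt r x0 = normal_closure Pi1 (word_class loops ` cycle_loops r)"
proof -
  let ?G = "word_group loops"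
  have "{word_class loops (W0 @ Q @ inv_word W0) | W0 Q y.
          walk V E src tgt x0 W0 y \<and> once_around_cycle V E src tgt y Q \<and> length Q \<le> r} =
        {g \<otimes>\<^bsub>?G\<^esub> a \<otimes>\<^bsub>?G\<^esub> inv\<^bsub>?G\<^esub> g | g a.
          g \<in> carrier ?G \<and> a \<in> word_class loops ` cycle_loops r}"
    (is "?generators = ?conjugates")
  proof (intro equalityI subsetI)
    fix z assume "z \<in> ?generators"
    then obtain W0 Q y where z: "z = word_class loops (W0 @ Q @ inv_word W0)"
      and W0: "walk V E src tgt x0 W0 y"
      and Q: "once_around_cycle V E src tgt y Q" "length Q \<le> r"
      by blast
    have y: "y \<in> V"
      using walk_endpoints[OF W0] by blast
    let ?g = "W0 @ inv_word (base_walk y)"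
    let ?c = "base_walk y @ Q @ inv_word (base_walk y)"
    have g: "?g \<in> loops"
      using W0 walk_inv_word[OF walk_base_walk[OF y]] by (auto simp: closed_walks_def
          intro: walk_append)
    have c: "?c \<in> cycle_loops r"
      using y Q by (auto simp: cycle_loops_def)
    have "(?g @ ?c @ inv_word ?g, W0 @ Q @ inv_word (base_walk y) @ base_walk y @ inv_word W0)
        \<in> word_equiv"
      using word_equiv_cancel_inner[of W0 "base_walk y"] by simp
    also have "(W0 @ Q @ inv_word (base_walk y) @ base_walk y @ inv_word W0, W0 @ Q @ inv_word W0)
        \<in> word_equiv"
      using word_equiv_cancel_inner[of "W0 @ Q" "base_walk y" "inv_word W0"] by simp
    finally have "(?g @ ?c @ inv_word ?g, W0 @ Q @ inv_word W0) \<in> word_equiv" .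
    moreover have "?c \<in> loops"
      using c cycle_loops_subset by blast
    ultimately have "word_class loops ?g \<otimes>\<^bsub>?G\<^esub> word_class loops ?c \<otimes>\<^bsub>?G\<^esub>
        inv\<^bsub>?G\<^esub> word_class loops ?g = z"
      using g by (simp add: z loops.conj_word_group loops.word_class_eq)
    with g c show "z \<in> ?conjugates"
      by (force simp: loops.carrier_word_group)
  next
    fix z assume "z \<in> ?conjugates"
    then obtain w y Q where w: "w \<in> loops" and y: "y \<in> V"
      and Q: "once_around_cycle V E src tgt y Q" "length Q \<le> r"
      and z: "z = word_class loops w \<otimes>\<^bsub>?G\<^esub>
        word_class loops (base_walk y @ Q @ inv_word (base_walk y)) \<otimes>\<^bsub>?G\<^esub>
        inv\<^bsub>?G\<^esub> word_class loops w"
      by (auto simp: loops.carrier_word_group cycle_loops_def)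
    have "base_walk y @ Q @ inv_word (base_walk y) \<in> loops"
      using y Q cycle_loops_subset by (auto simp: cycle_loops_def)
    then have "z = word_class loops ((w @ base_walk y) @ Q @ inv_word (w @ base_walk y))"
      using w by (simp add: z loops.conj_word_group)
    moreover have "walk V E src tgt x0 (w @ base_walk y) y"
      using w walk_base_walk[OF y] by (auto simp: closed_walks_def intro: walk_append)
    ultimately show "z \<in> ?generators"
      using Q by blast
  qed
  then show ?thesis
    unfolding pi1_r_def normal_closure_def Pi1_eq by simp
qed

lemma normal_pi1_r: "pi1_r V E src tgt r x0 \<lhd> Pi1"
  unfolding pi1_r_eq_normal_closure Pi1_eq
  using cycle_loops_subset
  by (intro group.normal_closure_normal loops.group_word_group) (auto simp: loops.carrier_word_group)

definition relators :: "nat \<Rightarrow> (nat \<times> bool) list set" where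
  "relators r = {[a] @ inv_word (code (letter_loop a)) | a. fst a \<in> generators} \<union>
     code ` cycle_loops r"

lemma finite_relators: "finite (relators r)"
proof -
  have "{[a] @ inv_word (code (letter_loop a)) | a. fst a \<in> generators} =
      (\<lambda>a. [a] @ inv_word (code (letter_loop a))) ` (generators \<times> UNIV)"
    by auto
  then show ?thesis
    using finite_generators finite_cycle_loops by (simp add: relators_def)
qed

lemma letter_relator_mem_words:
  "fst a \<in> generators \<Longrightarrow> [a] @ inv_word (code (letter_loop a)) \<in> words"
  using code.maps_into[OF letter_loop_mem_loops] by (simp add: free_words_def)

lemma relators_subset_words: "relators r \<subseteq> words"
  using letter_relator_mem_words code.maps_into cycle_loops_subset
  unfolding relators_def by blast

abbreviation "relator_closure r \<equiv> normal_closure Free (word_class words ` relators r)"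

lemma relator_classes_subset_carrier: "word_class words ` relators r \<subseteq> carrier Free"
  using relators_subset_words by (auto simp: Free_eq words.carrier_word_group)

lemma normal_relator_closure: "relator_closure r \<lhd> Free"
  using relator_classes_subset_carrier
  by (intro group.normal_closure_normal) (simp_all add: Free_eq words.group_word_group)

lemma relator_class_mem_closure: "\<rho> \<in> relators r \<Longrightarrow> word_class words \<rho> \<in> relator_closure r"
  using group.subset_normal_closure[OF _ relator_classes_subset_carrier]
  by (auto simp: Free_eq words.group_word_group)

lemma loop_hom_image_relator_closure: "loop_hom ` relator_closure r \<subseteq> pi1_r V E src tgt r x0"
proof (rule group_hom.image_normal_closure_subset[OF group_hom_loop_hom relator_classes_subset_carrier
      normal_pi1_r])
  show "loop_hom ` word_class words ` relators r \<subseteq> pi1_r V E src tgt r x0"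
  proof clarify
    fix \<rho> assume "\<rho> \<in> relators r"
    then consider (letter) a where "fst a \<in> generators" "\<rho> = [a] @ inv_word (code (letter_loop a))"
      | (cycle) c where "c \<in> cycle_loops r" "\<rho> = code c"
      by (auto simp: relators_def)
    then show "loop_hom (word_class words \<rho>) \<in> pi1_r V E src tgt r x0"
    proof cases
      case letter
      have loop: "letter_loop a \<in> loops"
        using letter(1) by (rule letter_loop_mem_loops)
      have "(word_loop \<rho>, letter_loop a @ inv_word (letter_loop a)) \<in> word_equiv"
        using word_equiv_append_context[OF word_equiv_inv_word[OF word_loop_code_loop[OF loop]],
            of "letter_loop a" "[]"]
        by (simp add: letter(2) word_loop_inv_word)
      also have "(letter_loop a @ inv_word (letter_loop a), []) \<in> word_equiv"
        by (rule word_equiv_cancel)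
      finally have "(word_loop \<rho>, []) \<in> word_equiv" .
      moreover have "\<rho> \<in> words"
        using \<open>\<rho> \<in> relators r\<close> relators_subset_words by blast
      ultimately have "loop_hom (word_class words \<rho>) = \<one>\<^bsub>Pi1\<^esub>"
        by (simp add: word_loop.word_group_map_class loops.word_class_eq Pi1_eq
            loops.one_word_group)
      then show ?thesis
        using subgroup.one_closed[OF normal_imp_subgroup[OF normal_pi1_r]] by simp
    next
      case cycle
      have c: "c \<in> loops"
        using cycle(1) cycle_loops_subset by blast
      then have "loop_hom (word_class words \<rho>) = word_class loops c"
        using word_loop_code_loop[OF c]
        by (simp add: cycle(2) word_loop.word_group_map_class code.maps_into loops.word_class_eq)
      then show ?thesis
        using group.subset_normal_closure[of Pi1 "word_class loops ` cycle_loops r"] cycle(1)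
          cycle_loops_subset
        by (auto simp: pi1_r_eq_normal_closure Pi1_eq loops.group_word_group
            loops.carrier_word_group)
    qed
  qed
qed

lemma code_hom_image_pi1_r: "code_hom ` pi1_r V E src tgt r x0 \<subseteq> relator_closure r"
  unfolding pi1_r_eq_normal_closure
proof (rule group_hom.image_normal_closure_subset[OF group_hom_code_hom _ normal_relator_closure])
  show "word_class loops ` cycle_loops r \<subseteq> carrier Pi1"
    using cycle_loops_subset by (auto simp: Pi1_eq loops.carrier_word_group)
  show "code_hom ` word_class loops ` cycle_loops r \<subseteq> relator_closure r"
  proof clarify
    fix c assume c: "c \<in> cycle_loops r"
    then have "c \<in> loops"
      using cycle_loops_subset by blast
    then have "code_hom (word_class loops c) = word_class words (code c)"
      by (rule code.word_group_map_class)
    moreover have "code c \<in> relators r"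
      using c by (simp add: relators_def)
    ultimately show "code_hom (word_class loops c) \<in> relator_closure r"
      by (simp add: relator_class_mem_closure)
  qed
qed

lemma code_loop_congruent_mod_relators:
  assumes "x \<in> carrier Free"
  shows "x \<otimes>\<^bsub>Free\<^esub> inv\<^bsub>Free\<^esub> code_hom (loop_hom x) \<in> relator_closure r"
proof -
  have hom: "code_hom \<circ> loop_hom \<in> hom Free Free"
    using group_hom.homh[OF group_hom_loop_hom] group_hom.homh[OF group_hom_code_hom]
    by (rule hom_compose)
  have letters: "word_class words [a] \<otimes>\<^bsub>Free\<^esub>
      inv\<^bsub>Free\<^esub> (code_hom \<circ> loop_hom) (word_class words [a]) \<in> relator_closure r"
    if a: "fst a \<in> generators" for a
  proof -
    have "[a] \<in> words" "code (letter_loop a) \<in> words"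
      using a code.maps_into[OF letter_loop_mem_loops[OF a]] by (simp_all add: free_words_def)
    then have "word_class words [a] \<otimes>\<^bsub>Free\<^esub>
        inv\<^bsub>Free\<^esub> (code_hom \<circ> loop_hom) (word_class words [a]) =
        word_class words ([a] @ inv_word (code (letter_loop a)))"
      using letter_loop_mem_loops[OF a]
      by (simp add: Free_eq word_loop.word_group_map_class code.word_group_map_class
          words.inv_word_group words.mult_word_group words.inv_word_mem)
    moreover have "[a] @ inv_word (code (letter_loop a)) \<in> relators r"
      using a unfolding relators_def by blast
    ultimately show ?thesis
      by (simp add: relator_class_mem_closure)
  qed
  from free_group_congruent_mod_normal[OF normal_relator_closure hom letters assms] show ?thesis
    by simp
qed

lemma deck_group_iso: "deck_group_r V E src tgt r x0 \<cong> Free Mod relator_closure r"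
  unfolding deck_group_r_def
proof (rule FactGroup_iso_via_retraction[OF normal_relator_closure normal_pi1_r])
  show "loop_hom \<in> hom Free Pi1"
    using group_hom_loop_hom by (rule group_hom.homh)
  show "code_hom \<in> carrier Pi1 \<rightarrow> carrier Free"
    using group_hom.hom_closed[OF group_hom_code_hom] by blast
  show "\<And>p. p \<in> carrier Pi1 \<Longrightarrow> loop_hom (code_hom p) = p"
    by (rule loop_hom_code_hom)
  show "loop_hom ` relator_closure r \<subseteq> pi1_r V E src tgt r x0"
    by (rule loop_hom_image_relator_closure)
  show "code_hom ` pi1_r V E src tgt r x0 \<subseteq> relator_closure r"
    by (rule code_hom_image_pi1_r)
  show "\<And>x. x \<in> carrier Free \<Longrightarrow>
      x \<otimes>\<^bsub>Free\<^esub> inv\<^bsub>Free\<^esub> code_hom (loop_hom x) \<in> relator_closure r"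
    by (rule code_loop_congruent_mod_relators)
qed

end

theorem proposition4p8:
  fixes V :: "'v set" and E :: "'e set" and src tgt :: "'e \<Rightarrow> 'v"
    and r :: nat and x0 :: 'v
  assumes "graph V E src tgt"
    and "finite V" and "finite E"
    and "connected_graph V E src tgt"
    and "x0 \<in> V"
  shows "finitely_presented (deck_group_r V E src tgt r x0)"
proof -
  interpret finite_rooted_graph V E src tgt x0
    using assms by unfold_locales
  show ?thesis
    unfolding finitely_presented_def
    by (intro exI[of _ generators] exI[of _ "relators r"] conjI finite_generators finite_relators
        relators_subset_words deck_group_iso)
qed

end
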